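(* Let $\Delta\ge 1$ and $s\ge 1$ be integers, $r=s\Delta$, and let $\sigma=(\Delta,\Delta,\ldots,\Delta)$ be the partition of $r$ into $s$ parts all equal to $\Delta$. Let $n\ge (r+1)^2$ and $q\ge r\Delta$, and let $H=H(n,r,q\mid\sigma)$. Then \[\nu(H)=\left\lfloor \frac{n\,(q-(q \bmod \Delta))}{r}\right\rfloor,\] where $q\bmod\Delta$ denotes the remainder of $q$ upon division by $\Delta$.
   Context: A $\sigma$-hypergraph $H=H(n,r,q\mid\sigma)$, for a partition $\sigma=(a_1,\ldots,a_s)$ of $r$, is the $r$-uniform hypergraph whose vertex set is the disjoint union of $n$ classes $V_1,\ldots,V_n$, each of size $q$; an $r$-subset $K$ of vertices is an edge iff the multiset of non-zero values $|K\cap V_i|$ ($1\le i\le n$) equals $\sigma$. A matching is a set of pairwise vertex-disjoint edges; $\nu(H)$ is the maximum size of a matching in $H$. *)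

theory Defs
  imports Main "HOL-Library.Multiset"
begin

definition sh_vertices :: "nat \<Rightarrow> nat \<Rightarrow> (nat \<times> nat) set" where
  "sh_vertices n q = {..<n} \<times> {..<q}"

definition sh_class :: "nat \<Rightarrow> nat \<Rightarrow> (nat \<times> nat) set" where
  "sh_class q i = {i} \<times> {..<q}"

definition sh_profile :: "nat \<Rightarrow> nat \<Rightarrow> (nat \<times> nat) set \<Rightarrow> nat multiset" where
  "sh_profile n q K =
     filter_mset (\<lambda>c. c \<noteq> 0) (mset (map (\<lambda>i. card (K \<inter> sh_class q i)) [0..<n]))"

text \<open>Edges of the sigma-hypergraph H(n,r,q|sigma); sigma is a partition of r given as a multiset.\<close>
definition sh_edges :: "nat \<Rightarrow> nat \<Rightarrow> nat \<Rightarrow> nat multiset \<Rightarrow> (nat \<times> nat) set set" where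
  "sh_edges n r q \<sigma> =
     {K. K \<subseteq> sh_vertices n q \<and> card K = r \<and> sh_profile n q K = \<sigma>}"

definition is_matching :: "'v set set \<Rightarrow> 'v set set \<Rightarrow> bool" where
  "is_matching E M \<longleftrightarrow> M \<subseteq> E \<and> (\<forall>e\<in>M. \<forall>f\<in>M. e \<noteq> f \<longrightarrow> e \<inter> f = {})"

definition matching_number :: "'v set set \<Rightarrow> nat" where
  "matching_number E = Max {card M | M. is_matching E M \<and> finite M}"

end

theory Submission
  imports Defs
begin

text \<open>Every edge meets every class in \<open>0\<close> or \<open>\<Delta>\<close> vertices, so a matching covers at most
  \<open>\<Delta>\<lfloor>q/\<Delta>\<rfloor>\<close> vertices of each class; this gives the upper bound. Conversely, cut each class
  into \<open>m = \<lfloor>q/\<Delta>\<rfloor>\<close> blocks of \<open>\<Delta>\<close> vertices, enumerate all \<open>nm\<close> blocks so that block \<open>p\<close>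
  lies in class \<open>p mod n\<close>, and take runs of \<open>s\<close> consecutive blocks as edges. Since \<open>s \<le> n\<close>,
  each run meets \<open>s\<close> distinct classes, and \<open>\<lfloor>nm/s\<rfloor>\<close> disjoint runs fit.\<close>

lemma matching_number_eqI:
  assumes "is_matching E M" "finite M" "card M = N"
    and "\<And>M'. is_matching E M' \<Longrightarrow> finite M' \<Longrightarrow> card M' \<le> N"
  shows "matching_number E = N"
proof -
  let ?S = "{card M | M. is_matching E M \<and> finite M}"
  have "?S \<subseteq> {..N}" using assms(4) by blast
  then have "finite ?S" by (rule finite_subset) simp
  moreover have "N \<in> ?S" using assms(1-3) by blast
  ultimately show ?thesis
    unfolding matching_number_def using assms(4) by (intro Max_eqI) blast+
qed

lemma card_eq_sum_card_Int_sh_class: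
  assumes "K \<subseteq> sh_vertices n q"
  shows "card K = (\<Sum>i<n. card (K \<inter> sh_class q i))"
proof -
  have "K = (\<Union>i<n. K \<inter> sh_class q i)"
    using assms unfolding sh_vertices_def sh_class_def by auto
  then have "card K = card (\<Union>i<n. K \<inter> sh_class q i)" by simp
  also have "\<dots> = (\<Sum>i<n. card (K \<inter> sh_class q i))"
  proof (rule card_UN_disjoint)
    show "\<forall>i\<in>{..<n}. finite (K \<inter> sh_class q i)"
      using assms finite_subset unfolding sh_vertices_def by blast
  qed (auto simp: sh_class_def)
  finally show ?thesis .
qed

lemma sh_edge_card_Int_sh_class_dvd:
  assumes "K \<in> sh_edges n r q (replicate_mset s \<Delta>)" and "i < n"
  shows "\<Delta> dvd card (K \<inter> sh_class q i)"
proof (cases "card (K \<inter> sh_class q i) = 0")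
  case False
  have "card (K \<inter> sh_class q i) \<in> set (map (\<lambda>i. card (K \<inter> sh_class q i)) [0..<n])"
    using assms(2) by simp
  then have "card (K \<inter> sh_class q i) \<in># sh_profile n q K"
    using False unfolding sh_profile_def by simp
  then have "card (K \<inter> sh_class q i) \<in># replicate_mset s \<Delta>"
    using assms(1) unfolding sh_edges_def by simp
  then show ?thesis by (simp split: if_splits)
qed simp
lemma dvd_le_imp_le_mult_div:
  fixes c q d :: nat
  assumes "d dvd c" and "c \<le> q"
  shows "c \<le> d * (q div d)"
proof -
  have "c = d * (c div d)" using assms(1) by simp
  also have "\<dots> \<le> d * (q div d)" using assms(2) by (intro mult_le_mono2 div_le_mono)
  finally show ?thesis .
qed
lemma matching_card_mult_le:
  assumes "is_matching (sh_edges n r q (replicate_mset s \<Delta>)) M" and "finite M"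
  shows "card M * r \<le> n * (\<Delta> * (q div \<Delta>))"
proof -
  let ?E = "sh_edges n r q (replicate_mset s \<Delta>)"
  have edges: "e \<in> ?E" if "e \<in> M" for e
    using assms(1) that unfolding is_matching_def by blast
  have disj: "pairwise disjnt M"
    using assms(1) unfolding is_matching_def pairwise_def disjnt_def by blast
  have sub: "e \<subseteq> sh_vertices n q" and card_e: "card e = r" if "e \<in> M" for e
    using edges[OF that] unfolding sh_edges_def by blast+
  have fin: "finite e" if "e \<in> M" for e
    using sub[OF that] finite_subset unfolding sh_vertices_def by blast
  have "card M * r = card (\<Union>M)"
    using card_Union_disjoint[OF disj fin] card_e by simp
  also have "\<dots> = (\<Sum>i<n. card (\<Union>M \<inter> sh_class q i))"
    by (rule card_eq_sum_card_Int_sh_class) (use sub in blast)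
  also have "\<dots> \<le> (\<Sum>i<n. \<Delta> * (q div \<Delta>))"
  proof (rule sum_mono)
    fix i assume i: "i \<in> {..<n}"
    have "\<Union>M \<inter> sh_class q i = (\<Union>e\<in>M. e \<inter> sh_class q i)" by blast
    also have "card \<dots> = (\<Sum>e\<in>M. card (e \<inter> sh_class q i))"
    proof (rule card_UN_disjoint[OF assms(2)])
      show "\<forall>e\<in>M. finite (e \<inter> sh_class q i)" using fin by blast
      show "\<forall>e\<in>M. \<forall>f\<in>M. e \<noteq> f \<longrightarrow> (e \<inter> sh_class q i) \<inter> (f \<inter> sh_class q i) = {}"
        using disj unfolding pairwise_def disjnt_def by blast
    qed
    finally have "card (\<Union>M \<inter> sh_class q i) = (\<Sum>e\<in>M. card (e \<inter> sh_class q i))" .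
    then have "\<Delta> dvd card (\<Union>M \<inter> sh_class q i)"
      using sh_edge_card_Int_sh_class_dvd[OF edges] i by (simp add: dvd_sum)
    moreover have "card (\<Union>M \<inter> sh_class q i) \<le> q"
      using card_mono[of "sh_class q i" "\<Union>M \<inter> sh_class q i"] by (simp add: sh_class_def)
    ultimately show "card (\<Union>M \<inter> sh_class q i) \<le> \<Delta> * (q div \<Delta>)"
      by (rule dvd_le_imp_le_mult_div)
  qed
  finally show ?thesis by simp
qed

lemma inj_on_mod_atLeastLessThan:
  fixes a s n :: nat
  assumes "s \<le> n"
  shows "inj_on (\<lambda>p. p mod n) {a..<a+s}"
proof (rule linorder_inj_onI')
  fix x y assume "x \<in> {a..<a+s}" "y \<in> {a..<a+s}" "x < y"
  then have "0 < y - x" "y - x < n" using assms by auto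
  then have "\<not> n dvd y - x" by (auto dest: dvd_imp_le)
  then show "x mod n \<noteq> y mod n"
    using mod_eq_dvd_iff_nat[of x y n] \<open>x < y\<close> by simp
qed

lemma filter_mset_nonzero_indicator:
  fixes d :: nat
  assumes "R \<subseteq> {..<n}" and "d > 0"
  shows "filter_mset (\<lambda>c. c \<noteq> 0) (mset (map (\<lambda>i. if i \<in> R then d else 0) [0..<n]))
           = replicate_mset (card R) d"
proof -
  have "filter (\<lambda>c. c \<noteq> 0) (map (\<lambda>i. if i \<in> R then d else 0) [0..<n])
          = map (\<lambda>_. d) (filter (\<lambda>i. i \<in> R) [0..<n])"
    using assms(2) by (induction n) auto
  moreover have "set (filter (\<lambda>i. i \<in> R) [0..<n]) = R" using assms(1) by auto
  then have "length (filter (\<lambda>i. i \<in> R) [0..<n]) = card R"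
    using distinct_card[of "filter (\<lambda>i. i \<in> R) [0..<n]"] by simp
  ultimately have "filter (\<lambda>c. c \<noteq> 0) (map (\<lambda>i. if i \<in> R then d else 0) [0..<n])
                    = replicate (card R) d"
    by (simp add: map_replicate_const)
  then show ?thesis by (metis mset_filter mset_replicate)
qed

text \<open>Block \<open>p\<close> is the \<open>(p div n)\<close>-th group of \<open>\<Delta>\<close> consecutive vertices of class \<open>p mod n\<close>,
  and \<open>block_vertex n \<Delta> (p, k)\<close> is its \<open>k\<close>-th vertex.\<close>
definition block_vertex :: "nat \<Rightarrow> nat \<Rightarrow> nat \<times> nat \<Rightarrow> nat \<times> nat" where
  "block_vertex n \<Delta> = (\<lambda>(p, k). (p mod n, \<Delta> * (p div n) + k))"

definition window :: "nat \<Rightarrow> nat \<Rightarrow> nat set" where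
  "window s j = {j * s..<j * s + s}"

definition window_edge :: "nat \<Rightarrow> nat \<Rightarrow> nat \<Rightarrow> nat \<Rightarrow> (nat \<times> nat) set" where
  "window_edge n \<Delta> s j = block_vertex n \<Delta> ` (window s j \<times> {..<\<Delta>})"

lemma inj_on_block_vertex:
  assumes "\<Delta> > 0"
  shows "inj_on (block_vertex n \<Delta>) (UNIV \<times> {..<\<Delta>})"
proof (rule inj_onI, clarify)
  fix p k p' k' assume k: "k < \<Delta>" "k' < \<Delta>"
    and "block_vertex n \<Delta> (p, k) = block_vertex n \<Delta> (p', k')"
  then have mod: "p mod n = p' mod n" and v: "\<Delta> * (p div n) + k = \<Delta> * (p' div n) + k'"
    by (auto simp: block_vertex_def)
  have "p div n = (\<Delta> * (p div n) + k) div \<Delta>" using k assms by simp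
  also have "\<dots> = p' div n" using v k assms by simp
  finally have div: "p div n = p' div n" .
  show "p = p' \<and> k = k'"
    using v div mod by (metis add_left_imp_eq div_mult_mod_eq)
qed

lemma block_vertex_mem_sh_vertices:
  assumes "p < n * (q div \<Delta>)" and "k < \<Delta>"
  shows "block_vertex n \<Delta> (p, k) \<in> sh_vertices n q"
proof -
  have "n > 0" using assms(1) by (cases n) auto
  then have "p div n < q div \<Delta>" using assms(1) by (simp add: div_less_iff_less_mult mult.commute)
  have "\<Delta> * (p div n) + k < \<Delta> * Suc (p div n)" using assms(2) by simp
  also have "\<dots> \<le> \<Delta> * (q div \<Delta>)" using \<open>p div n < q div \<Delta>\<close> by (intro mult_le_mono2) simp
  also have "\<dots> \<le> q" by (simp add: mult.commute div_times_less_eq_dividend)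
  finally show ?thesis using \<open>n > 0\<close> by (simp add: block_vertex_def sh_vertices_def)
qed

lemma window_disjoint:
  assumes "j \<noteq> j'"
  shows "window s j \<inter> window s j' = {}"
proof -
  have "p div s = j" if "p \<in> window s j" for p j
    using that by (intro div_nat_eqI) (auto simp: window_def mult.commute)
  then show ?thesis using assms by blast
qed

lemma window_edge_Int_sh_class:
  assumes "window_edge n \<Delta> s j \<subseteq> sh_vertices n q"
  shows "window_edge n \<Delta> s j \<inter> sh_class q i
           = block_vertex n \<Delta> ` ({p \<in> window s j. p mod n = i} \<times> {..<\<Delta>})"
  using assms unfolding window_edge_def
  by (fastforce simp: block_vertex_def sh_class_def sh_vertices_def)

lemma card_window_edge_Int_sh_class:
  assumes "\<Delta> > 0" and "s \<le> n" and "window_edge n \<Delta> s j \<subseteq> sh_vertices n q"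
  shows "card (window_edge n \<Delta> s j \<inter> sh_class q i)
           = (if i \<in> (\<lambda>p. p mod n) ` window s j then \<Delta> else 0)"
proof -
  let ?P = "{p \<in> window s j. p mod n = i}"
  have inj_mod: "inj_on (\<lambda>p. p mod n) ?P"
    using inj_on_mod_atLeastLessThan[OF assms(2)] by (rule inj_on_subset) (auto simp: window_def)
  have "card ?P = card ((\<lambda>p. p mod n) ` ?P)" using inj_mod by (rule card_image[symmetric])
  also have "(\<lambda>p. p mod n) ` ?P = (\<lambda>p. p mod n) ` window s j \<inter> {i}" by auto
  finally have P: "card ?P = (if i \<in> (\<lambda>p. p mod n) ` window s j then 1 else 0)" by simp
  have "inj_on (block_vertex n \<Delta>) (?P \<times> {..<\<Delta>})"
    using inj_on_block_vertex[OF assms(1)] by (rule inj_on_subset) auto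
  then have "card (window_edge n \<Delta> s j \<inter> sh_class q i) = card ?P * \<Delta>"
    unfolding window_edge_Int_sh_class[OF assms(3)] by (simp add: card_image card_cartesian_product)
  with P show ?thesis by simp
qed

lemma window_edge_mem_sh_edges:
  assumes "\<Delta> > 0" and "s \<le> n" and "j * s + s \<le> n * (q div \<Delta>)"
  shows "window_edge n \<Delta> s j \<in> sh_edges n (s * \<Delta>) q (replicate_mset s \<Delta>)"
proof -
  let ?E = "window_edge n \<Delta> s j" and ?R = "(\<lambda>p. p mod n) ` window s j"
  have inj: "inj_on (block_vertex n \<Delta>) (window s j \<times> {..<\<Delta>})"
    using inj_on_block_vertex[OF assms(1)] by (rule inj_on_subset) auto
  have sub: "?E \<subseteq> sh_vertices n q"
    using assms(3) unfolding window_edge_def window_def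
    by (auto intro!: block_vertex_mem_sh_vertices)
  have card: "card ?E = s * \<Delta>"
    using card_image[OF inj] by (simp add: window_edge_def window_def card_cartesian_product)
  have "card ?R = s"
    using card_image[OF inj_on_mod_atLeastLessThan[OF assms(2)]] by (simp add: window_def)
  moreover have "?R \<subseteq> {..<n}" using assms(2) by (auto simp: window_def)
  moreover have "map (\<lambda>i. card (?E \<inter> sh_class q i)) [0..<n] = map (\<lambda>i. if i \<in> ?R then \<Delta> else 0) [0..<n]"
    using card_window_edge_Int_sh_class[OF assms(1,2) sub] by simp
  ultimately have "sh_profile n q ?E = replicate_mset s \<Delta>"
    unfolding sh_profile_def using filter_mset_nonzero_indicator assms(1) by metis
  with sub card show ?thesis unfolding sh_edges_def by blast
qed

lemma window_edge_disjoint: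
  assumes "\<Delta> > 0" and "j \<noteq> j'"
  shows "window_edge n \<Delta> s j \<inter> window_edge n \<Delta> s j' = {}"
proof -
  have "window_edge n \<Delta> s j \<inter> window_edge n \<Delta> s j'
          = block_vertex n \<Delta> ` ((window s j \<times> {..<\<Delta>}) \<inter> (window s j' \<times> {..<\<Delta>}))"
    unfolding window_edge_def
    by (rule inj_on_image_Int[OF inj_on_block_vertex[OF assms(1)], symmetric]) auto
  also have "(window s j \<times> {..<\<Delta>}) \<inter> (window s j' \<times> {..<\<Delta>}) = {}"
    using window_disjoint[OF assms(2), of s] by blast
  finally show ?thesis by simp
qed

lemma matching_number_sh_edges_uniform:
  assumes "\<Delta> > 0" and "s > 0" and "s \<le> n"
  shows "matching_number (sh_edges n (s * \<Delta>) q (replicate_mset s \<Delta>)) = n * (q div \<Delta>) div s"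
proof -
  let ?E = "sh_edges n (s * \<Delta>) q (replicate_mset s \<Delta>)"
  define N where "N = n * (q div \<Delta>) div s"
  define M where "M = window_edge n \<Delta> s ` {..<N}"
  have "j * s + s \<le> n * (q div \<Delta>)" if "j < N" for j
  proof -
    have "j * s + s \<le> N * s" using that by (metis Suc_leI mult_Suc mult_le_mono1 add.commute)
    also have "\<dots> \<le> n * (q div \<Delta>)" unfolding N_def by (rule div_times_less_eq_dividend)
    finally show ?thesis .
  qed
  then have "M \<subseteq> ?E" unfolding M_def using window_edge_mem_sh_edges assms by blast
  moreover have "e \<inter> f = {}" if e: "e \<in> M" and f: "f \<in> M" and "e \<noteq> f" for e f
  proof -
    obtain j j' where j: "e = window_edge n \<Delta> s j" and j': "f = window_edge n \<Delta> s j'"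
      using e f unfolding M_def by blast
    then have "j \<noteq> j'" using \<open>e \<noteq> f\<close> by metis
    then show ?thesis unfolding j j' by (rule window_edge_disjoint[OF assms(1)])
  qed
  ultimately have matching: "is_matching ?E M" unfolding is_matching_def by blast
  have "window_edge n \<Delta> s j \<noteq> {}" for j
    using assms(1,2) by (auto simp: window_edge_def window_def)
  then have "inj_on (window_edge n \<Delta> s) {..<N}"
    using window_edge_disjoint[OF assms(1)] by (intro inj_onI) (metis Int_absorb)
  then have card_M: "card M = N" unfolding M_def by (simp add: card_image)
  have bound: "card M' \<le> N" if "is_matching ?E M'" and "finite M'" for M'
  proof -
    have "card M' * s * \<Delta> \<le> n * (q div \<Delta>) * \<Delta>"
      using matching_card_mult_le[OF that] by (simp add: ac_simps)
    then have "card M' * s \<le> n * (q div \<Delta>)" using assms(1) by simp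
    then show ?thesis unfolding N_def using assms(2) by (simp add: less_eq_div_iff_mult_less_eq)
  qed
  show ?thesis
    unfolding N_def[symmetric] by (rule matching_number_eqI[OF matching _ card_M bound]) (simp add: M_def)
qed

theorem theorem3p7:
  fixes \<Delta> s r n q :: nat
  assumes "\<Delta> \<ge> 1" and "s \<ge> 1" and "r = s * \<Delta>"
    and "n \<ge> (r + 1)^2" and "q \<ge> r * \<Delta>"
  shows "matching_number (sh_edges n r q (replicate_mset s \<Delta>))
           = (n * (q - q mod \<Delta>)) div r"
proof -
  have "s \<le> r" using assms(1,3) by simp
  also have "r \<le> (r + 1)^2" by (simp add: power2_eq_square)
  finally have "s \<le> n" using assms(4) by linarith
  have "n * (q - q mod \<Delta>) div r = n * (q div \<Delta>) * \<Delta> div (s * \<Delta>)"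
    using assms(3) by (simp add: minus_mod_eq_mult_div ac_simps)
  also have "\<dots> = n * (q div \<Delta>) div s" using assms(1) by simp
  finally show ?thesis
    using matching_number_sh_edges_uniform[OF _ _ \<open>s \<le> n\<close>] assms(1-3) by simp
qed

end
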